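(* Let $X$ be a path-connected $A$-space which contains a countable subset $Y$ whose open hull is $X$. Then for any starting points $m,l\in X$ the lion has a strategy in $X$ for the starting points $m$ (man) and $l$ (lion). In particular, in any path-connected finite topological space the lion has a strategy for any starting points.
   Context: An $A$-space is a topological space in which arbitrary intersections of open sets are open. In an $A$-space, the open hull of a subset $Y$ is the intersection of all open sets containing $Y$. For a topological space $X$ and $x\in X$, let $P_x(X)$ be the set of continuous maps $\gamma:[0,+\infty)\to X$ with $\gamma(0)=x$. For $\gamma\in P_x(X)$ and $t\ge 0$, write $\gamma_{<t}=\gamma|_{[0,t)}$ and $\gamma_{\le t}=\gamma|_{[0,t]}$. Given starting points $m$ (man) and $l$ (lion) in $X$, a strategy for the lion is a function $S:P_m(X)\to P_l(X)$ such that (i) for each $\alpha\in P_m(X)$ there exists $t\ge 0$ with $S(\alpha)(t)=\alpha(t)$; and (ii) (no-lookahead rule) whenever $\alpha,\alpha'\in P_m(X)$ and $t\ge0$ satisfy $\alpha_{<t}=\alpha'_{<t}$, then $S(\alpha)_{\le t}=S(\alpha')_{\le t}$. The Axiom of Choice is assumed. *)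

theory Defs
  imports "HOL-Analysis.Analysis"
begin

definition A_space :: "'a topology \<Rightarrow> bool" where
  "A_space X \<longleftrightarrow> (\<forall>F. F \<noteq> {} \<and> (\<forall>U\<in>F. openin X U) \<longrightarrow> openin X (\<Inter>F))"

definition open_hull :: "'a topology \<Rightarrow> 'a set \<Rightarrow> 'a set" where
  "open_hull X Y = \<Inter>{U. openin X U \<and> Y \<subseteq> U}"

text \<open>P_x(X): continuous maps [0,+inf) -> X starting at x (values outside [0,+inf) irrelevant).\<close>
definition paths_from :: "'a topology \<Rightarrow> 'a \<Rightarrow> (real \<Rightarrow> 'a) set" where
  "paths_from X x = {\<gamma>. continuous_map (subtopology euclideanreal {0..}) X \<gamma> \<and> \<gamma> 0 = x}"

definition lion_strategy ::
  "'a topology \<Rightarrow> 'a \<Rightarrow> 'a \<Rightarrow> ((real \<Rightarrow> 'a) \<Rightarrow> (real \<Rightarrow> 'a)) \<Rightarrow> bool" where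
  "lion_strategy X m l S \<longleftrightarrow>
     (\<forall>\<alpha>\<in>paths_from X m. S \<alpha> \<in> paths_from X l) \<and>
     (\<forall>\<alpha>\<in>paths_from X m. \<exists>t\<ge>0. S \<alpha> t = \<alpha> t) \<and>
     (\<forall>\<alpha>\<in>paths_from X m. \<forall>\<alpha>'\<in>paths_from X m. \<forall>t\<ge>0.
        (\<forall>s. 0 \<le> s \<and> s < t \<longrightarrow> \<alpha> s = \<alpha>' s) \<longrightarrow>
        (\<forall>s. 0 \<le> s \<and> s \<le> t \<longrightarrow> S \<alpha> s = S \<alpha>' s))"

end

theory Submission
  imports Defs
begin

text \<open>The lion walks along a fixed tour through points \<open>l = w\<^sub>0, w\<^sub>1, w\<^sub>2, \<dots>\<close>,
  reaching \<open>w\<^sub>k\<close> at time \<open>T\<^sub>k = k / (k + 1)\<close>, where every point of the countable set \<open>Y\<close>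
  occurs infinitely often among the \<open>w\<^sub>k\<close>. In an A-space the open hull of \<open>{y}\<close> is the
  smallest neighbourhood of \<open>y\<close>. The man's position at time 1 lies in the hull of some
  \<open>y \<in> Y\<close>, hence by continuity so does his position at all times close to 1, in particular at
  some \<open>T\<^sub>k\<close> with \<open>w\<^sub>k = y\<close>. At the first \<open>k\<close> for which the man is in the hull of \<open>w\<^sub>k\<close> at
  time \<open>T\<^sub>k\<close>, the lion jumps onto the man's path: every neighbourhood of \<open>w\<^sub>k\<close> contains the
  man's position, so the jump is continuous. That first \<open>k\<close> only depends on the man's past,
  which gives the no-lookahead rule.\<close>

lemma continuous_map_glue_le:
  assumes f: "continuous_map (subtopology euclideanreal S) X f"
    and g: "continuous_map (subtopology euclideanreal S) X g"
    and nhds: "\<And>V. openin X V \<Longrightarrow> f T \<in> V \<Longrightarrow> g T \<in> V"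
  shows "continuous_map (subtopology euclideanreal S) X (\<lambda>t. if t \<le> T then f t else g t)"
  unfolding continuous_map_def
proof (intro conjI allI impI)
  show "(\<lambda>t. if t \<le> T then f t else g t) \<in> topspace (subtopology euclideanreal S) \<rightarrow> topspace X"
    using continuous_map_funspace[OF f] continuous_map_funspace[OF g] by (auto simp: Pi_iff)
next
  fix V assume V: "openin X V"
  obtain A where A: "open A" "{x \<in> S. f x \<in> V} = A \<inter> S"
    using openin_continuous_map_preimage[OF f V] by (auto simp: openin_subtopology)
  obtain B where B: "open B" "{x \<in> S. g x \<in> V} = B \<inter> S"
    using openin_continuous_map_preimage[OF g V] by (auto simp: openin_subtopology)
  have "{x \<in> S. (if x \<le> T then f x else g x) \<in> V} = (A \<inter> {..<T} \<union> B \<inter> {T<..} \<union> A \<inter> B) \<inter> S"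
    using A(2) B(2) nhds[OF V] by (auto simp: set_eq_iff) (metis linorder_less_linear not_le)+
  moreover have "open (A \<inter> {..<T} \<union> B \<inter> {T<..} \<union> A \<inter> B)"
    using A(1) B(1) by (intro open_Un open_Int) auto
  ultimately show "openin (subtopology euclideanreal S)
      {x \<in> topspace (subtopology euclideanreal S). (if x \<le> T then f x else g x) \<in> V}"
    by (auto simp: openin_subtopology)
qed

lemma continuous_map_preimage_near:
  fixes t :: "'b::metric_space"
  assumes "continuous_map (subtopology euclidean S) X f" "openin X U" "t \<in> S" "f t \<in> U"
  obtains d where "d > 0" "\<And>s. s \<in> S \<Longrightarrow> dist s t < d \<Longrightarrow> f s \<in> U"
proof -
  obtain B where B: "open B" "{x \<in> S. f x \<in> U} = B \<inter> S"
    using openin_continuous_map_preimage[OF assms(1,2)] by (auto simp: openin_subtopology)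
  then obtain d where "d > 0" "ball t d \<subseteq> B"
    using assms(3,4) openE by blast
  with B(2) show thesis
    by (intro that[of d]) (auto simp: dist_commute subset_iff set_eq_iff)
qed

primrec piecewise :: "(nat \<Rightarrow> real \<Rightarrow> 'a) \<Rightarrow> (nat \<Rightarrow> real) \<Rightarrow> nat \<Rightarrow> real \<Rightarrow> 'a" where
  "piecewise p T 0 = p 0"
| "piecewise p T (Suc k) = (\<lambda>t. if t \<le> T (Suc k) then piecewise p T k t else p (Suc k) t)"

lemma piecewise_prefix:
  assumes "mono T" "j \<le> k" "t \<le> T j"
  shows "piecewise p T k t = piecewise p T j t"
  using assms(2,3)
proof (induction k)
  case (Suc k)
  then show ?case
    using monoD[OF \<open>mono T\<close>] by (cases "j = Suc k") (auto simp: order_trans)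
qed simp

lemma piecewise_eq_last:
  assumes "mono T" "\<And>k. p k (T (Suc k)) = p (Suc k) (T (Suc k))" "T k \<le> t"
  shows "piecewise p T k t = p k t"
  using assms(3)
proof (induction k)
  case (Suc k)
  have "T k \<le> T (Suc k)" using monoD[OF \<open>mono T\<close>] by simp
  with Suc show ?case by (auto simp: assms(2))
qed simp

lemma continuous_map_piecewise:
  assumes "mono T" "\<And>k. p k (T (Suc k)) = p (Suc k) (T (Suc k))"
    and "\<And>k. continuous_map euclideanreal X (p k)"
  shows "continuous_map euclideanreal X (piecewise p T k)"
proof (induction k)
  case (Suc k)
  have "T k \<le> T (Suc k)" using monoD[OF \<open>mono T\<close>] by simp
  then have "piecewise p T k (T (Suc k)) = p (Suc k) (T (Suc k))"
    using piecewise_eq_last[where p = p, OF assms(1,2)] assms(2) by simp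
  then show ?case
    using continuous_map_glue_le[of UNIV X "piecewise p T k" "p (Suc k)" "T (Suc k)"] Suc assms(3)
    by simp
qed (simp add: assms(3))

lemma path_connected_space_paths_between_times:
  fixes T :: "nat \<Rightarrow> real"
  assumes "path_connected_space X" "range w \<subseteq> topspace X" "strict_mono T"
  obtains p where "\<And>k. continuous_map euclideanreal X (p k)"
    "\<And>k. p k (T k) = w k" "\<And>k. p k (T (Suc k)) = w (Suc k)"
proof -
  have "\<forall>k. \<exists>g. pathin X g \<and> g 0 = w k \<and> g 1 = w (Suc k)"
    using assms(1,2) unfolding path_connected_space_def by blast
  then obtain g where g: "\<And>k. pathin X (g k)" "\<And>k. g k 0 = w k" "\<And>k. g k 1 = w (Suc k)"
    by metis
  have gap: "T k < T (Suc k)" for k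
    using \<open>strict_mono T\<close> by (simp add: strict_monoD)
  define c where "c k t = max 0 (min 1 ((t - T k) / (T (Suc k) - T k)))" for k t
  have "continuous_map euclideanreal (top_of_set {0..1}) (c k)" for k
    using gap[of k] by (intro continuous_map_into_subtopology)
      (auto simp: c_def continuous_map_iff_continuous2 intro!: continuous_intros)
  then have "continuous_map euclideanreal X (g k \<circ> c k)" for k
    using g(1) unfolding pathin_def by (rule continuous_map_compose)
  moreover have "T (Suc k) - T k \<noteq> 0" for k
    using gap[of k] by simp
  ultimately show thesis
    by (intro that[of "\<lambda>k. g k \<circ> c k"]) (auto simp: c_def g)
qed

lemma countable_enumeration_infinitely_often:
  assumes "countable Y" "Y \<noteq> {}"
  obtains f :: "nat \<Rightarrow> 'a" where "range f \<subseteq> Y" "\<And>y n. y \<in> Y \<Longrightarrow> \<exists>k\<ge>n. f k = y"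
proof
  show "range (\<lambda>j. from_nat_into Y (fst (prod_decode j))) \<subseteq> Y"
    using from_nat_into[OF assms(2)] by auto
  fix y n assume "y \<in> Y"
  then obtain i where "from_nat_into Y i = y"
    using from_nat_into_surj[OF assms(1)] by blast
  then show "\<exists>k\<ge>n. from_nat_into Y (fst (prod_decode k)) = y"
    by (intro exI[of _ "prod_encode (i, n)"]) (simp add: le_prod_encode_2)
qed

lemma open_hull_subset: "openin X U \<Longrightarrow> Y \<subseteq> U \<Longrightarrow> open_hull X Y \<subseteq> U"
  unfolding open_hull_def by blast

lemma openin_open_hull: "A_space X \<Longrightarrow> Y \<subseteq> topspace X \<Longrightarrow> openin X (open_hull X Y)"
  unfolding A_space_def open_hull_def
  by (erule allE[of _ "{U. openin X U \<and> Y \<subseteq> U}"]) auto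

lemma open_hull_eq_UN_singletons: "open_hull X Y = (\<Union>y\<in>Y. open_hull X {y})"
proof
  show "(\<Union>y\<in>Y. open_hull X {y}) \<subseteq> open_hull X Y"
    unfolding open_hull_def by blast
  show "open_hull X Y \<subseteq> (\<Union>y\<in>Y. open_hull X {y})"
  proof
    fix x assume x: "x \<in> open_hull X Y"
    define U where "U = \<Union>{V. openin X V \<and> x \<notin> V}"
    show "x \<in> (\<Union>y\<in>Y. open_hull X {y})"
    proof (rule ccontr)
      assume "x \<notin> (\<Union>y\<in>Y. open_hull X {y})"
      then have "Y \<subseteq> U"
        unfolding U_def open_hull_def by blast
      then have "x \<in> U"
        using x open_hull_subset[of X U Y] by (auto simp: U_def)
      then show False
        by (simp add: U_def)
    qed
  qed
qed

lemma Least_eq_if_agree_below: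
  fixes P Q :: "nat \<Rightarrow> bool"
  assumes "P n" and agree: "\<And>k. k \<le> (LEAST k. P k) \<Longrightarrow> Q k \<longleftrightarrow> P k"
  shows "(LEAST k. Q k) = (LEAST k. P k)"
proof (rule Least_equality)
  show "Q (LEAST k. P k)"
    using agree LeastI[of P, OF \<open>P n\<close>] by blast
  show "(LEAST k. P k) \<le> j" if "Q j" for j
    using that agree not_less_Least[of j P] by (meson linorder_not_le order_less_imp_le)
qed

text \<open>In a non-Hausdorff space the values of a path on \<open>[0, t)\<close> do not determine its value at
  \<open>t\<close>. The lion therefore follows a path chosen from the germ of \<open>\<alpha>\<close> to the right of \<open>s\<close>,
  which is determined by \<open>\<alpha>\<close> on \<open>[0, t)\<close> for every \<open>t > s\<close>.\<close>

definition germ_path :: "'a topology \<Rightarrow> 'a \<Rightarrow> real \<Rightarrow> (real \<Rightarrow> 'a) \<Rightarrow> real \<Rightarrow> 'a" where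
  "germ_path X m s \<alpha> =
     (SOME \<gamma>. \<gamma> \<in> paths_from X m \<and> (\<exists>s'>s. \<forall>u. 0 \<le> u \<and> u < s' \<longrightarrow> \<gamma> u = \<alpha> u))"

lemma germ_path:
  assumes "\<alpha> \<in> paths_from X m"
  shows "germ_path X m s \<alpha> \<in> paths_from X m"
    and "\<exists>s'>s. \<forall>u. 0 \<le> u \<and> u < s' \<longrightarrow> germ_path X m s \<alpha> u = \<alpha> u"
proof -
  have "germ_path X m s \<alpha> \<in> paths_from X m \<and>
      (\<exists>s'>s. \<forall>u. 0 \<le> u \<and> u < s' \<longrightarrow> germ_path X m s \<alpha> u = \<alpha> u)"
    unfolding germ_path_def by (rule someI[of _ \<alpha>]) (use assms in \<open>auto intro: gt_ex\<close>)
  then show "germ_path X m s \<alpha> \<in> paths_from X m"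
    and "\<exists>s'>s. \<forall>u. 0 \<le> u \<and> u < s' \<longrightarrow> germ_path X m s \<alpha> u = \<alpha> u"
    by blast+
qed

lemma germ_path_cong:
  assumes agree: "\<forall>u. 0 \<le> u \<and> u < t \<longrightarrow> \<alpha> u = \<alpha>' u" and "s < t"
  shows "germ_path X m s \<alpha> = germ_path X m s \<alpha>'"
proof -
  have "(\<exists>s'>s. \<forall>u. 0 \<le> u \<and> u < s' \<longrightarrow> \<gamma> u = \<alpha> u) \<longleftrightarrow>
        (\<exists>s'>s. \<forall>u. 0 \<le> u \<and> u < s' \<longrightarrow> \<gamma> u = \<alpha>' u)" for \<gamma>
    using agree \<open>s < t\<close> by (metis min_less_iff_conj)
  then show ?thesis
    unfolding germ_path_def by simp
qed

locale lion_tour =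
  fixes X :: "'a topology" and m l :: 'a
    and tour :: "nat \<Rightarrow> real \<Rightarrow> 'a" and T :: "nat \<Rightarrow> real"
  assumes continuous_tour: "continuous_map euclideanreal X (tour k)"
    and tour_prefix: "j \<le> k \<Longrightarrow> t \<le> T j \<Longrightarrow> tour k t = tour j t"
    and tour_start: "tour k 0 = l"
    and mono_times: "mono T"
    and times_nonneg: "0 \<le> T k"
    and man_meets_hull: "\<alpha> \<in> paths_from X m \<Longrightarrow> \<exists>k. \<alpha> (T k) \<in> open_hull X {tour k (T k)}"
begin

definition meeting :: "(real \<Rightarrow> 'a) \<Rightarrow> nat" where
  "meeting \<alpha> = (LEAST k. \<alpha> (T k) \<in> open_hull X {tour k (T k)})"

definition strategy :: "(real \<Rightarrow> 'a) \<Rightarrow> real \<Rightarrow> 'a" where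
  "strategy \<alpha> t =
     (if t \<le> T (meeting \<alpha>) then tour (meeting \<alpha>) t else germ_path X m (T (meeting \<alpha>)) \<alpha> t)"

lemma meeting_in_hull:
  "\<alpha> \<in> paths_from X m \<Longrightarrow> \<alpha> (T (meeting \<alpha>)) \<in> open_hull X {tour (meeting \<alpha>) (T (meeting \<alpha>))}"
  unfolding meeting_def by (rule LeastI_ex) (rule man_meets_hull)

lemma meeting_cong:
  assumes "\<alpha> \<in> paths_from X m" and agree: "\<forall>u. 0 \<le> u \<and> u < t \<longrightarrow> \<alpha> u = \<alpha>' u"
    and "T (meeting \<alpha>) < t"
  shows "meeting \<alpha>' = meeting \<alpha>"
  unfolding meeting_def
proof (rule Least_eq_if_agree_below)
  show "\<alpha> (T (meeting \<alpha>)) \<in> open_hull X {tour (meeting \<alpha>) (T (meeting \<alpha>))}"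
    using meeting_in_hull[OF assms(1)] .
  fix k assume "k \<le> (LEAST k. \<alpha> (T k) \<in> open_hull X {tour k (T k)})"
  then have "T k < t"
    using monoD[OF mono_times] \<open>T (meeting \<alpha>) < t\<close> unfolding meeting_def by fastforce
  then have "\<alpha>' (T k) = \<alpha> (T k)"
    using agree times_nonneg by simp
  then show "\<alpha>' (T k) \<in> open_hull X {tour k (T k)} \<longleftrightarrow> \<alpha> (T k) \<in> open_hull X {tour k (T k)}"
    by simp
qed

lemma strategy_in_paths:
  assumes \<alpha>: "\<alpha> \<in> paths_from X m"
  shows "strategy \<alpha> \<in> paths_from X l"
proof -
  let ?k = "meeting \<alpha>"
  obtain s where "T ?k < s" "\<forall>u. 0 \<le> u \<and> u < s \<longrightarrow> germ_path X m (T ?k) \<alpha> u = \<alpha> u"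
    using germ_path(2)[OF \<alpha>] by blast
  then have hull: "germ_path X m (T ?k) \<alpha> (T ?k) \<in> open_hull X {tour ?k (T ?k)}"
    using meeting_in_hull[OF \<alpha>] times_nonneg by simp
  have "continuous_map (top_of_set {0..}) X (strategy \<alpha>)"
    unfolding strategy_def
  proof (rule continuous_map_glue_le)
    show "continuous_map (top_of_set {0..}) X (tour ?k)"
      by (intro continuous_map_from_subtopology continuous_tour)
    show "continuous_map (top_of_set {0..}) X (germ_path X m (T ?k) \<alpha>)"
      using germ_path(1)[OF \<alpha>] by (simp add: paths_from_def)
  qed (use hull open_hull_subset in blast)
  then show ?thesis
    using times_nonneg tour_start by (simp add: paths_from_def strategy_def)
qed

lemma strategy_catches:
  assumes \<alpha>: "\<alpha> \<in> paths_from X m"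
  shows "\<exists>t\<ge>0. strategy \<alpha> t = \<alpha> t"
proof -
  let ?k = "meeting \<alpha>"
  obtain s where s: "T ?k < s" "\<forall>u. 0 \<le> u \<and> u < s \<longrightarrow> germ_path X m (T ?k) \<alpha> u = \<alpha> u"
    using germ_path(2)[OF \<alpha>] by blast
  define t where "t = (T ?k + s) / 2"
  have "T ?k < t" "t < s" "0 \<le> t"
    using s(1) times_nonneg[of ?k] by (auto simp: t_def)
  with s(2) show ?thesis
    by (intro exI[of _ t]) (simp add: strategy_def)
qed

lemma strategy_causal:
  assumes \<alpha>: "\<alpha> \<in> paths_from X m" and \<alpha>': "\<alpha>' \<in> paths_from X m"
    and agree: "\<forall>u. 0 \<le> u \<and> u < t \<longrightarrow> \<alpha> u = \<alpha>' u" and s: "0 \<le> s" "s \<le> t"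
  shows "strategy \<alpha> s = strategy \<alpha>' s"
proof (cases "T (meeting \<alpha>) < t \<or> T (meeting \<alpha>') < t")
  case True
  have agree': "\<forall>u. 0 \<le> u \<and> u < t \<longrightarrow> \<alpha>' u = \<alpha> u"
    using agree by simp
  have same: "meeting \<alpha>' = meeting \<alpha>"
    using True meeting_cong[OF \<alpha> agree] meeting_cong[OF \<alpha>' agree'] by auto
  with True have "germ_path X m (T (meeting \<alpha>)) \<alpha> = germ_path X m (T (meeting \<alpha>)) \<alpha>'"
    using germ_path_cong[OF agree] by auto
  with same show ?thesis
    by (simp add: strategy_def)
next
  case False
  let ?j = "min (meeting \<alpha>) (meeting \<alpha>')"
  have "s \<le> T (meeting \<alpha>)" "s \<le> T (meeting \<alpha>')" "s \<le> T ?j"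
    using False s by (auto simp: min_def)
  then show ?thesis
    using tour_prefix[of ?j "meeting \<alpha>" s] tour_prefix[of ?j "meeting \<alpha>'" s]
    by (simp add: strategy_def)
qed

theorem lion_strategy: "lion_strategy X m l strategy"
  unfolding lion_strategy_def
  using strategy_in_paths strategy_catches strategy_causal by blast

end

lemma path_meets_hull_of_recurrent_sequence:
  assumes "A_space X" "Y \<subseteq> topspace X" "open_hull X Y = topspace X"
    and \<alpha>: "\<alpha> \<in> paths_from X m"
    and recurrent: "\<And>y n. y \<in> Y \<Longrightarrow> \<exists>k\<ge>n. w k = y"
  shows "\<exists>k. \<alpha> (real k / real (Suc k)) \<in> open_hull X {w k}"
proof -
  have \<alpha>_cont: "continuous_map (top_of_set {0..}) X \<alpha>"
    using \<alpha> by (simp add: paths_from_def)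
  then have "\<alpha> 1 \<in> open_hull X Y"
    using assms(3) continuous_map_funspace[OF \<alpha>_cont] by (auto simp: Pi_iff)
  then obtain y where y: "y \<in> Y" "\<alpha> 1 \<in> open_hull X {y}"
    unfolding open_hull_eq_UN_singletons[of X Y] by blast
  have "openin X (open_hull X {y})"
    using openin_open_hull[OF assms(1)] assms(2) y(1) by blast
  then obtain d where d: "d > 0" "\<And>s. s \<in> {0..} \<Longrightarrow> dist s 1 < d \<Longrightarrow> \<alpha> s \<in> open_hull X {y}"
    using continuous_map_preimage_near[OF \<alpha>_cont _ _ y(2)] by auto
  obtain n :: nat where "1 / d < n"
    using reals_Archimedean2 by blast
  obtain k where "n \<le> k" "w k = y"
    using recurrent y(1) by blast
  have "1 / d < real (Suc k)"
    using \<open>1 / d < n\<close> \<open>n \<le> k\<close> by (simp add: of_nat_mono order_less_le_trans)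
  have "dist (real k / real (Suc k)) 1 = 1 / real (Suc k)"
    by (simp add: dist_real_def field_simps)
  also have "\<dots> < d"
    using \<open>1 / d < real (Suc k)\<close> d(1) by (simp add: field_simps)
  finally have "\<alpha> (real k / real (Suc k)) \<in> open_hull X {w k}"
    using d(2) \<open>w k = y\<close> by simp
  then show ?thesis ..
qed

theorem A_space_lion_strategy:
  assumes "path_connected_space X" "A_space X"
    and "countable Y" "Y \<subseteq> topspace X" "open_hull X Y = topspace X" "l \<in> topspace X"
  shows "\<exists>S. lion_strategy X m l S"
proof -
  have "Y \<noteq> {}"
    using assms(5,6) by (auto simp: open_hull_def)
  then obtain f :: "nat \<Rightarrow> 'a" where f: "range f \<subseteq> Y" "\<And>y n. y \<in> Y \<Longrightarrow> \<exists>k\<ge>n. f k = y"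
    using countable_enumeration_infinitely_often[OF assms(3)] by blast
  define w where "w = case_nat l f"
  have w_topspace: "range w \<subseteq> topspace X"
    using f(1) assms(4,6) unfolding w_def by (fastforce split: nat.split)
  have w_recurrent: "\<exists>k\<ge>n. w k = y" if "y \<in> Y" for y n
    using f(2)[OF that, of n] by (auto simp: w_def intro: le_SucI)
  define T where "T k = real k / real (Suc k)" for k
  have "strict_mono T"
    by (rule strict_mono_Suc_iff[THEN iffD2]) (simp add: T_def field_simps)
  then obtain p where p: "\<And>k. continuous_map euclideanreal X (p k)"
      "\<And>k. p k (T k) = w k" "\<And>k. p k (T (Suc k)) = w (Suc k)"
    using path_connected_space_paths_between_times[OF assms(1) w_topspace] by blast
  have "mono T"
    using \<open>strict_mono T\<close> by (rule strict_mono_mono)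
  have matching: "p k (T (Suc k)) = p (Suc k) (T (Suc k))" for k
    using p(2,3) by simp
  have at_times: "piecewise p T k (T k) = w k" for k
    using piecewise_eq_last[OF \<open>mono T\<close> matching] p(2) by simp
  interpret lion_tour X m l "piecewise p T" T
  proof
    show "continuous_map euclideanreal X (piecewise p T k)" for k
      using continuous_map_piecewise[OF \<open>mono T\<close> matching p(1)] .
    show "piecewise p T k t = piecewise p T j t" if "j \<le> k" "t \<le> T j" for j k t
      using piecewise_prefix[OF \<open>mono T\<close> that] .
    show "piecewise p T k 0 = l" for k
      using piecewise_prefix[where p = p, OF \<open>mono T\<close>, of 0 k 0] at_times[of 0]
      by (simp add: T_def w_def)
    show "mono T" by fact
    show "0 \<le> T k" for k
      by (simp add: T_def)
    show "\<exists>k. \<alpha> (T k) \<in> open_hull X {piecewise p T k (T k)}" if "\<alpha> \<in> paths_from X m" for \<alpha>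
    proof -
      have "\<exists>k. \<alpha> (T k) \<in> open_hull X {w k}"
        using path_meets_hull_of_recurrent_sequence[OF assms(2,4,5) that w_recurrent]
        by (simp add: T_def)
      then show ?thesis
        by (simp add: at_times)
    qed
  qed
  show ?thesis
    using lion_strategy by blast
qed

lemma A_space_if_finite_topspace:
  assumes "finite (topspace X)"
  shows "A_space X"
  unfolding A_space_def
proof (intro allI impI)
  fix F assume F: "F \<noteq> {} \<and> (\<forall>U\<in>F. openin X U)"
  then have "finite F"
    using assms openin_subset finite_subset[of F "Pow (topspace X)"] by blast
  with F show "openin X (\<Inter>F)"
    by auto
qed

lemma open_hull_topspace: "open_hull X (topspace X) = topspace X"
  unfolding open_hull_def by (auto intro: openin_subset)

theorem mainTheorem5:
  fixes X :: "'a topology" and Y :: "'a set" and m l :: 'a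
  assumes "path_connected_space X"
    and "A_space X"
    and "countable Y" and "Y \<subseteq> topspace X"
    and "open_hull X Y = topspace X"
    and "m \<in> topspace X" and "l \<in> topspace X"
  shows "(\<exists>S. lion_strategy X m l S) \<and>
         (\<forall>(Z :: 'a topology) m' l'. finite (topspace Z) \<and> path_connected_space Z \<and>
            m' \<in> topspace Z \<and> l' \<in> topspace Z \<longrightarrow> (\<exists>S. lion_strategy Z m' l' S))"
proof (intro conjI allI impI)
  show "\<exists>S. lion_strategy X m l S"
    using A_space_lion_strategy assms(1-5,7) .
next
  fix Z :: "'a topology" and m' l'
  assume Z: "finite (topspace Z) \<and> path_connected_space Z \<and> m' \<in> topspace Z \<and> l' \<in> topspace Z"
  then show "\<exists>S. lion_strategy Z m' l' S"
    by (intro A_space_lion_strategy[of Z "topspace Z"])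
      (simp_all add: A_space_if_finite_topspace open_hull_topspace countable_finite)
qed

end
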